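(* Let $f \in \mathbb{Z}[x]$ be a tower-stable polynomial, let $a$ be a positive integer, and let $b$ be an $f$-valid positive integer. Then there exists a sequence of positive integers $(x_n)_{n \ge 1}$ such that for every $n \ge 1$, $$f^{x_n}(a) \equiv x_n \pmod{b^n},$$ and for every $n \ge 2$, $x_n = c_n b^{n-1} + x_{n-1}$ for some integer $c_n$ with $0 \le c_n < b$.
   Context: $f^m$ denotes the $m$-th iterate of $f$. For a positive integer $m$, $f_m : \mathbb{Z}/m\mathbb{Z} \to \mathbb{Z}/m\mathbb{Z}$ denotes the reduction map $x \bmod m \mapsto f(x) \bmod m$. For a self-map $\sigma$ of a finite set $F$ and $y \in F$, the cycle length of $\sigma$ on $y$ is the least $l \ge 1$ such that $\sigma^{k}(y) = \sigma^{k+l}(y)$ for some $k \ge 0$; the period of $\sigma$ is the least common multiple of the cycle lengths of all $y \in F$. Let $\lambda_f(m)$ denote the period of $f_m$. The polynomial $f$ is called tower-stable if for every prime $p$, $f_p$ is not a cyclic permutation of length $p$ (a single cycle through all $p$ elements). A positive integer $b$ is called valid if for every pair of primes $p, q$ with $p \mid b$ and $q \mid p-1$ we have $q \mid b$. A positive integer $b$ is called $f$-valid if $b$ is square-free, valid, and for every pair of primes $p, q$ with $p \mid b$ and $q \mid \lambda_f(p)$ we have $q \mid b$. *)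

theory Defs
  imports "HOL-Computational_Algebra.Polynomial" "HOL-Computational_Algebra.Primes" "HOL-Computational_Algebra.Squarefree" "HOL-Number_Theory.Cong"
begin

(* reduction map f_m on Z/mZ, represented on the residues {0..<m} *)
definition red_map :: "int poly \<Rightarrow> int \<Rightarrow> int \<Rightarrow> int" where
  "red_map f m x = poly f x mod m"

definition residues_set :: "int \<Rightarrow> int set" where
  "residues_set m = {0..<m}"

definition cycle_length :: "('a \<Rightarrow> 'a) \<Rightarrow> 'a \<Rightarrow> nat" where
  "cycle_length \<sigma> y = (LEAST l. l \<ge> 1 \<and> (\<exists>k. (\<sigma> ^^ k) y = (\<sigma> ^^ (k + l)) y))"

definition period :: "('a \<Rightarrow> 'a) \<Rightarrow> 'a set \<Rightarrow> nat" where
  "period \<sigma> F = Lcm (cycle_length \<sigma> ` F)"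

definition lambda_f :: "int poly \<Rightarrow> nat \<Rightarrow> nat" where
  "lambda_f f m = period (red_map f (int m)) (residues_set (int m))"

definition is_full_cycle :: "('a \<Rightarrow> 'a) \<Rightarrow> 'a set \<Rightarrow> bool" where
  "is_full_cycle \<sigma> F = ((\<forall>x\<in>F. \<sigma> x \<in> F) \<and> bij_betw \<sigma> F F \<and>
      (\<forall>x\<in>F. \<forall>y\<in>F. \<exists>k. (\<sigma> ^^ k) x = y))"

definition tower_stable :: "int poly \<Rightarrow> bool" where
  "tower_stable f = (\<forall>p::nat. prime p \<longrightarrow>
      \<not> is_full_cycle (red_map f (int p)) (residues_set (int p)))"

definition valid :: "nat \<Rightarrow> bool" where
  "valid b = (\<forall>p q :: nat. prime p \<longrightarrow> prime q \<longrightarrow> p dvd b \<longrightarrow> q dvd (p - 1) \<longrightarrow> q dvd b)"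

definition f_valid :: "int poly \<Rightarrow> nat \<Rightarrow> bool" where
  "f_valid f b = (squarefree b \<and> valid b \<and>
     (\<forall>p q :: nat. prime p \<longrightarrow> prime q \<longrightarrow> p dvd b \<longrightarrow> q dvd lambda_f f p \<longrightarrow> q dvd b))"

end

(*
  For a prime p dividing b, tower stability makes the orbit y |-> f^y(a) modulo p run into a
  cycle of length l < p, and f-validity makes every prime factor of Q = l (p - 1) a smaller
  prime factor of b. Taylor expansion of f^l along the cycle lifts the periodicity to p^n.
  If the multiplier of the cycle (the derivative of f^l along it) is a unit modulo p, then by
  Fermat the orbit modulo p^n has period Q p^(n-1) from a fixed point on. If p divides the
  multiplier, the period stays l but the preperiod grows linearly in n; a solution y of
  f^y(a) = y (mod p^n) below the preperiod would make p^n divide f^l(y) - y, which for y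
  above the roots of f^l(x) - x is nonzero and only polynomially large in n, so this cannot
  happen for y above a bound independent of n.

  Treating the primes of b in increasing order, every period Q p^(k-1) divides the modulus
  already reached, so the class of f^Y(a) for one large solution Y is again a class of
  solutions for the next modulus. This produces a class of solutions of f^x(a) = x modulo b^K,
  and from then on the orbit modulo b^(n+1) has period b^n, so each class modulo b^n contains
  one modulo b^(n+1). The least representatives above a fixed bound of such a coherent
  sequence of classes are the required x_n.
*)

theory Submission
  imports Defs "HOL-Number_Theory.Residues"
begin

section \<open>Taylor expansion of polynomial iterates\<close>

text \<open>The derivative of the iterate \<open>f\<^sup>k\<close> at \<open>z\<close>, written out by the chain rule.\<close>
definition deriv_iter :: "int poly \<Rightarrow> nat \<Rightarrow> int \<Rightarrow> int" where
  "deriv_iter f k z = (\<Prod>i<k. poly (pderiv f) ((poly f ^^ i) z))"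

lemma cong_poly:
  fixes f :: "'a::unique_euclidean_ring poly"
  assumes "[x = y] (mod m)"
  shows "[poly f x = poly f y] (mod m)"
proof (induction f)
  case (pCons c g)
  then show ?case using assms by (simp add: cong_add cong_mult)
qed simp

lemma cong_funpow_poly:
  fixes f :: "'a::unique_euclidean_ring poly"
  assumes "[x = y] (mod m)"
  shows "[(poly f ^^ k) x = (poly f ^^ k) y] (mod m)"
  using assms by (induction k) (auto intro: cong_poly)

lemma poly_taylor_dvd:
  fixes f :: "'a::idom poly"
  shows "h\<^sup>2 dvd poly f (z + h) - poly f z - h * poly (pderiv f) z"
proof (induction f)
  case (pCons c g)
  then obtain e where e: "poly g (z + h) - poly g z - h * poly (pderiv g) z = h\<^sup>2 * e"
    by (auto elim: dvdE)
  have "poly (pCons c g) (z + h) - poly (pCons c g) z - h * poly (pderiv (pCons c g)) z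
        = z * (poly g (z + h) - poly g z - h * poly (pderiv g) z) + h * (poly g (z + h) - poly g z)"
    by (simp add: pderiv_pCons algebra_simps)
  also have "\<dots> = h\<^sup>2 * (z * e + poly (pderiv g) z + h * e)"
    using e by (simp add: algebra_simps power2_eq_square)
  finally show ?case by simp
qed simp

lemma poly_taylor_cong:
  fixes f :: "'a::unique_euclidean_ring poly"
  assumes "[u = v] (mod m)"
  shows "[poly f u = poly f v + (u - v) * poly (pderiv f) v] (mod m\<^sup>2)"
proof -
  have "m\<^sup>2 dvd (u - v)\<^sup>2"
    using assms by (simp add: cong_iff_dvd_diff dvd_diff_commute dvd_power_same)
  also have "\<dots> dvd poly f (v + (u - v)) - poly f v - (u - v) * poly (pderiv f) v"
    by (rule poly_taylor_dvd)
  finally show ?thesis by (simp add: cong_iff_dvd_diff algebra_simps)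
qed

lemma funpow_poly_taylor_cong:
  fixes f :: "int poly"
  assumes "[u = v] (mod m)"
  shows "[(poly f ^^ k) u = (poly f ^^ k) v + (u - v) * deriv_iter f k v] (mod m\<^sup>2)"
proof (induction k)
  case (Suc k)
  define A B where "A = (poly f ^^ k) u" and "B = (poly f ^^ k) v"
  have "[A - B = (u - v) * deriv_iter f k v] (mod m\<^sup>2)"
    using Suc.IH by (simp add: A_def B_def cong_iff_dvd_diff algebra_simps)
  have "[A = B] (mod m)"
    unfolding A_def B_def using assms by (rule cong_funpow_poly)
  then have "[poly f A = poly f B + (A - B) * poly (pderiv f) B] (mod m\<^sup>2)"
    by (rule poly_taylor_cong)
  also have "[poly f B + (A - B) * poly (pderiv f) B
      = poly f B + (u - v) * deriv_iter f k v * poly (pderiv f) B] (mod m\<^sup>2)"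
    using \<open>[A - B = (u - v) * deriv_iter f k v] (mod m\<^sup>2)\<close>
    by (intro cong_add cong_refl cong_scalar_right)
  finally show ?case
    by (simp add: A_def B_def deriv_iter_def mult.assoc)
qed (simp add: deriv_iter_def)

lemma deriv_iter_add:
  "deriv_iter f (k + j) z = deriv_iter f k z * deriv_iter f j ((poly f ^^ k) z)"
  by (induction j) (simp_all add: deriv_iter_def funpow_add algebra_simps)

lemma funpow_poly_is_poly:
  fixes f :: "'a::comm_semiring_1 poly"
  shows "\<exists>g. \<forall>x. poly g x = (poly f ^^ k) x"
proof (induction k)
  case 0
  show ?case
    by (intro exI[of _ "[:0, 1:]"]) simp
next
  case (Suc k)
  then obtain g where "\<forall>x. poly g x = (poly f ^^ k) x"
    by blast
  then show ?case
    by (intro exI[of _ "pcompose f g"]) (simp add: poly_pcompose)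
qed

section \<open>Periodicity of the orbit modulo prime powers\<close>

definition orbit :: "int poly \<Rightarrow> int \<Rightarrow> nat \<Rightarrow> int" where
  "orbit f a n = (poly f ^^ n) a"

lemma funpow_add_apply: "(f ^^ m) ((f ^^ n) x) = (f ^^ (m + n)) x"
  by (simp add: funpow_add)

lemma orbit_add: "orbit f a (y + k) = (poly f ^^ k) (orbit f a y)"
  by (simp add: orbit_def funpow_add_apply add.commute)

lemma deriv_iter_orbit_Suc:
  "deriv_iter f (Suc k) (orbit f a y) =
     poly (pderiv f) (orbit f a y) * deriv_iter f k (orbit f a (Suc y))"
  using deriv_iter_add[of f 1 k "orbit f a y"] by (simp add: deriv_iter_def orbit_def)

definition orbit_periodic_mod :: "int poly \<Rightarrow> int \<Rightarrow> int \<Rightarrow> nat \<Rightarrow> nat \<Rightarrow> bool" where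
  "orbit_periodic_mod f a m D T \<longleftrightarrow> (\<forall>y\<ge>T. [orbit f a (y + D) = orbit f a y] (mod m))"

lemma orbit_periodic_modD:
  "orbit_periodic_mod f a m D T \<Longrightarrow> T \<le> y \<Longrightarrow> [orbit f a (y + D) = orbit f a y] (mod m)"
  by (simp add: orbit_periodic_mod_def)

lemma orbit_periodic_mod_mono:
  "orbit_periodic_mod f a m D T \<Longrightarrow> T \<le> T' \<Longrightarrow> orbit_periodic_mod f a m D T'"
  by (simp add: orbit_periodic_mod_def)

lemma orbit_periodic_mod_mult:
  assumes "orbit_periodic_mod f a m D T"
  shows "orbit_periodic_mod f a m (j * D) T"
  unfolding orbit_periodic_mod_def
proof (intro allI impI)
  fix y assume "T \<le> y"
  then show "[orbit f a (y + j * D) = orbit f a y] (mod m)"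
  proof (induction j)
    case (Suc j)
    have "[orbit f a ((y + j * D) + D) = orbit f a (y + j * D)] (mod m)"
      using assms Suc.prems by (intro orbit_periodic_modD) auto
    then have "[orbit f a (y + Suc j * D) = orbit f a (y + j * D)] (mod m)"
      by (simp add: algebra_simps)
    then show ?case using Suc.IH[OF Suc.prems] by (rule cong_trans)
  qed simp
qed

lemma orbit_periodic_mod_dvd_period:
  assumes "orbit_periodic_mod f a m D T" "D dvd D'"
  shows "orbit_periodic_mod f a m D' T"
proof -
  from assms(2) obtain c where "D' = D * c"
    by (rule dvdE)
  with orbit_periodic_mod_mult[OF assms(1), of c] show ?thesis
    by (simp add: mult.commute)
qed

lemma orbit_periodic_mod_cong:
  assumes "orbit_periodic_mod f a m D T" "T \<le> y" "T \<le> y'" "[y = y'] (mod D)"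
  shows "[orbit f a y = orbit f a y'] (mod m)"
proof -
  have *: "[orbit f a v = orbit f a u] (mod m)" if "T \<le> u" "u \<le> v" "[v = u] (mod D)" for u v
  proof -
    have "\<exists>j. v = j * D + u"
      using that cong_le_nat[of u v D] by blast
    then obtain j where "v = u + j * D"
      by (auto simp: add.commute)
    then show ?thesis
      using orbit_periodic_mod_mult[OF assms(1)] that(1) by (simp add: orbit_periodic_mod_def)
  qed
  show ?thesis
  proof (cases "y \<le> y'")
    case True
    show ?thesis using *[OF assms(2) True cong_sym[OF assms(4)]] by (rule cong_sym)
  next
    case False
    then show ?thesis using *[OF assms(3) _ assms(4)] by simp
  qed
qed

lemma orbit_periodic_mod_transfer:
  assumes "orbit_periodic_mod f a m D T" "T \<le> y" "T \<le> Y" "[y = Y] (mod D)"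
    and "[int y = int Y] (mod m)" "[orbit f a Y = int Y] (mod m)"
  shows "[orbit f a y = int y] (mod m)"
proof -
  have "[orbit f a y = orbit f a Y] (mod m)"
    using assms(1-4) by (rule orbit_periodic_mod_cong)
  also have "[orbit f a Y = int Y] (mod m)"
    by (fact assms(6))
  also have "[int Y = int y] (mod m)"
    using assms(5) by (rule cong_sym)
  finally show ?thesis .
qed

lemma multiplier_shift_cong:
  assumes "orbit_periodic_mod f a m D T" "T \<le> y"
  shows "[deriv_iter f D (orbit f a y) = deriv_iter f D (orbit f a T)] (mod m)"
  using assms(2)
proof (induction y rule: dec_induct)
  case (step y)
  show ?case
  proof (cases D)
    case (Suc k)
    have "deriv_iter f D (orbit f a (Suc y))
        = deriv_iter f k (orbit f a (Suc y)) * poly (pderiv f) (orbit f a (y + D))"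
      using deriv_iter_add[of f k 1 "orbit f a (Suc y)"]
      by (simp add: Suc deriv_iter_def orbit_add[symmetric])
    also have "[\<dots> = deriv_iter f k (orbit f a (Suc y)) * poly (pderiv f) (orbit f a y)] (mod m)"
      using orbit_periodic_modD[OF assms(1)] step.hyps
      by (intro cong_scalar_left cong_poly) simp
    also have "deriv_iter f k (orbit f a (Suc y)) * poly (pderiv f) (orbit f a y)
        = deriv_iter f D (orbit f a y)"
      by (simp add: Suc deriv_iter_orbit_Suc)
    finally show ?thesis using step.IH by (rule cong_trans)
  qed (simp add: deriv_iter_def)
qed simp

lemma multiplier_power_cong:
  assumes "orbit_periodic_mod f a m D T" "T \<le> y"
  shows "[deriv_iter f (D * j) (orbit f a y) = deriv_iter f D (orbit f a y) ^ j] (mod m)"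
proof (induction j)
  case (Suc j)
  have "[deriv_iter f D (orbit f a (y + D * j)) = deriv_iter f D (orbit f a T)] (mod m)"
    using assms by (intro multiplier_shift_cong) auto
  then have shift: "[deriv_iter f D (orbit f a (y + D * j)) = deriv_iter f D (orbit f a y)] (mod m)"
    using cong_sym[OF multiplier_shift_cong[OF assms]] by (rule cong_trans)
  have "deriv_iter f (D * Suc j) (orbit f a y)
      = deriv_iter f (D * j) (orbit f a y) * deriv_iter f D (orbit f a (y + D * j))"
    using deriv_iter_add[of f "D * j" D] by (simp add: orbit_add add.commute)
  also have "[\<dots> = deriv_iter f D (orbit f a y) ^ j * deriv_iter f D (orbit f a y)] (mod m)"
    using Suc.IH shift by (rule cong_mult)
  finally show ?case by (simp only: power_Suc2)
qed (simp add: deriv_iter_def)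

lemma power_Suc_dvd_square_power:
  fixes q :: "'a::comm_semiring_1"
  assumes "1 \<le> k"
  shows "q ^ Suc k dvd (q ^ k)\<^sup>2"
proof -
  have "q ^ Suc k dvd q ^ (k * 2)"
    using assms by (intro le_imp_power_dvd) simp
  then show ?thesis
    by (simp only: power_mult)
qed

lemma cong_cancel_dvd_summand:
  fixes x y z m :: "'a::unique_euclidean_ring"
  assumes "[x = y + z] (mod m)" "m dvd z"
  shows "[x = y] (mod m)"
proof -
  have "[y + z = y + 0] (mod m)"
    using assms(2) by (intro cong_add cong_refl) (simp add: cong_0_iff)
  then have "[y + z = y] (mod m)"
    by simp
  with assms(1) show ?thesis
    by (rule cong_trans)
qed

lemma orbit_periodic_lift_attracting:
  fixes p :: nat
  assumes "1 \<le> k" and periodic: "orbit_periodic_mod f a (int p ^ k) D T"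
    and attracting: "\<And>y. T \<le> y \<Longrightarrow> int p dvd deriv_iter f D (orbit f a y)"
  shows "orbit_periodic_mod f a (int p ^ Suc k) D (T + D)"
  unfolding orbit_periodic_mod_def
proof (intro allI impI)
  fix y assume "T + D \<le> y"
  define y' where "y' = y - D"
  have y': "y = y' + D" "T \<le> y'"
    using \<open>T + D \<le> y\<close> by (simp_all add: y'_def)
  define u v where "u = orbit f a y" and "v = orbit f a y'"
  have uv: "[u = v] (mod int p ^ k)"
    using orbit_periodic_modD[OF periodic y'(2)] by (simp add: u_def v_def y')
  have "[(poly f ^^ D) u = (poly f ^^ D) v + (u - v) * deriv_iter f D v] (mod int p ^ Suc k)"
    using funpow_poly_taylor_cong[OF uv] power_Suc_dvd_square_power[OF assms(1)]
    by (rule cong_dvd_modulus)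
  moreover have "int p ^ Suc k dvd (u - v) * deriv_iter f D v"
    unfolding power_Suc2 using uv attracting[OF y'(2)]
    by (intro mult_dvd_mono) (simp_all add: v_def cong_iff_dvd_diff)
  ultimately have "[(poly f ^^ D) u = (poly f ^^ D) v] (mod int p ^ Suc k)"
    by (rule cong_cancel_dvd_summand)
  then show "[orbit f a (y + D) = orbit f a y] (mod int p ^ Suc k)"
    by (simp add: u_def v_def y' orbit_add)
qed

lemma cong_arith_progression:
  fixes z :: "nat \<Rightarrow> int"
  assumes step: "\<And>j. [z (Suc j) = z 1 + (z j - z 0)] (mod m)"
  shows "[z j = z 0 + int j * (z 1 - z 0)] (mod m)"
proof (induction j)
  case (Suc j)
  have "[z 1 + (z j - z 0) = z 1 + (int j * (z 1 - z 0))] (mod m)"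
    using Suc.IH by (intro cong_add cong_refl) (simp add: cong_iff_dvd_diff algebra_simps)
  with step[of j] have "[z (Suc j) = z 1 + int j * (z 1 - z 0)] (mod m)"
    by (rule cong_trans)
  then show ?case
    by (simp add: algebra_simps)
qed simp

lemma orbit_periodic_lift_indifferent:
  fixes p :: nat
  assumes "1 \<le> k" and periodic: "orbit_periodic_mod f a (int p ^ k) D T"
    and indifferent: "\<And>y. T \<le> y \<Longrightarrow> [deriv_iter f D (orbit f a y) = 1] (mod int p)"
  shows "orbit_periodic_mod f a (int p ^ Suc k) (p * D) T"
  unfolding orbit_periodic_mod_def
proof (intro allI impI)
  fix y assume "T \<le> y"
  define z where "z j = orbit f a (y + j * D)" for j
  have z_Suc: "z (Suc j) = (poly f ^^ D) (z j)" for j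
    by (simp add: z_def orbit_add[symmetric] algebra_simps)
  have z_cong: "[z j = z 0] (mod int p ^ k)" for j
    using orbit_periodic_modD[OF orbit_periodic_mod_mult[OF periodic] \<open>T \<le> y\<close>]
    by (simp add: z_def)
  have step: "[z (Suc j) = z 1 + (z j - z 0)] (mod int p ^ Suc k)" for j
  proof -
    define W where "W = deriv_iter f D (z 0)"
    have "[(poly f ^^ D) (z j) = (poly f ^^ D) (z 0) + (z j - z 0) * W] (mod int p ^ Suc k)"
      using funpow_poly_taylor_cong[OF z_cong] power_Suc_dvd_square_power[OF assms(1)]
      unfolding W_def by (rule cong_dvd_modulus)
    also have "(poly f ^^ D) (z 0) + (z j - z 0) * W
        = ((poly f ^^ D) (z 0) + (z j - z 0)) + (z j - z 0) * (W - 1)"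
      by (simp add: algebra_simps)
    finally have "[z (Suc j) = z 1 + (z j - z 0) + (z j - z 0) * (W - 1)] (mod int p ^ Suc k)"
      by (simp add: z_Suc)
    moreover have "int p ^ Suc k dvd (z j - z 0) * (W - 1)"
      unfolding power_Suc2 W_def using z_cong[of j] indifferent[OF \<open>T \<le> y\<close>]
      by (intro mult_dvd_mono) (simp_all add: z_def cong_iff_dvd_diff)
    ultimately show ?thesis
      by (rule cong_cancel_dvd_summand)
  qed
  have progression: "[z j = z 0 + int j * (z 1 - z 0)] (mod int p ^ Suc k)" for j
    using step by (rule cong_arith_progression)
  have "int p ^ Suc k dvd int p * (z 1 - z 0)"
    unfolding power_Suc using z_cong[of 1] by (simp add: cong_iff_dvd_diff dvd_diff_commute)
  with progression[of p] have "[z p = z 0] (mod int p ^ Suc k)"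
    by (rule cong_cancel_dvd_summand)
  then show "[orbit f a (y + p * D) = orbit f a y] (mod int p ^ Suc k)"
    by (simp add: z_def)
qed

lemma fermat_theorem_int:
  fixes p :: nat and w :: int
  assumes "prime p" "\<not> int p dvd w"
  shows "[w ^ (p - 1) = 1] (mod int p)"
proof -
  have "residues (int p)"
    using prime_gt_1_nat[OF assms(1)] by (simp add: residues_def)
  moreover have "coprime w (int p)"
    using assms prime_imp_coprime[of "int p" w] by (simp add: coprime_commute)
  ultimately show ?thesis
    using residues.euler_theorem totient_prime[OF assms(1)] by fastforce
qed

lemma orbit_periodic_prime_powers_indifferent:
  fixes p :: nat
  assumes "prime p" and periodic: "orbit_periodic_mod f a (int p) l T"
    and indifferent: "\<not> int p dvd deriv_iter f l (orbit f a T)"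
  shows "1 \<le> n \<Longrightarrow> orbit_periodic_mod f a (int p ^ n) (l * (p - 1) * p ^ (n - 1)) T"
proof (induction n rule: nat_induct_at_least)
  case base
  show ?case
    using orbit_periodic_mod_mult[OF periodic, of "p - 1"] by (simp add: mult.commute)
next
  case (Suc n)
  define D where "D = l * (p - 1) * p ^ (n - 1)"
  have "[deriv_iter f D (orbit f a y) = 1] (mod int p)" if "T \<le> y" for y
  proof -
    define w where "w = deriv_iter f l (orbit f a y)"
    have "\<not> int p dvd w"
      using multiplier_shift_cong[OF periodic that] indifferent by (simp add: w_def cong_dvd_iff)
    have "[deriv_iter f D (orbit f a y) = w ^ ((p - 1) * p ^ (n - 1))] (mod int p)"
      using multiplier_power_cong[OF periodic that] by (simp add: D_def w_def mult.assoc)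
    also have "[w ^ ((p - 1) * p ^ (n - 1)) = 1] (mod int p)"
      using cong_pow[OF fermat_theorem_int[OF assms(1) \<open>\<not> int p dvd w\<close>], of "p ^ (n - 1)"]
      by (simp add: power_mult)
    finally show ?thesis .
  qed
  then have "orbit_periodic_mod f a (int p ^ Suc n) (p * D) T"
    using Suc by (intro orbit_periodic_lift_indifferent) (simp_all add: D_def)
  moreover have "p * D = l * (p - 1) * p ^ (Suc n - 1)"
    using Suc.hyps by (cases n) (simp_all add: D_def)
  ultimately show ?case
    by simp
qed

lemma orbit_periodic_prime_powers_attracting:
  fixes p :: nat
  assumes periodic: "orbit_periodic_mod f a (int p) l T"
    and attracting: "int p dvd deriv_iter f l (orbit f a T)"
  shows "1 \<le> n \<Longrightarrow> orbit_periodic_mod f a (int p ^ n) l (T + (n - 1) * l)"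
proof (induction n rule: nat_induct_at_least)
  case (Suc n)
  have "int p dvd deriv_iter f l (orbit f a y)" if "T + (n - 1) * l \<le> y" for y
    using multiplier_shift_cong[OF periodic, of y] that attracting by (simp add: cong_dvd_iff)
  moreover have "T + (Suc n - 1) * l = T + (n - 1) * l + l"
    using Suc.hyps by (cases n) auto
  ultimately show ?case
    using Suc by (simp only:) (intro orbit_periodic_lift_attracting; simp)
qed (use periodic in simp)

section \<open>Attracting cycles\<close>

lemma abs_poly_le_coeff_sum:
  fixes R :: "int poly" and x :: int
  assumes "0 \<le> x"
  shows "\<bar>poly R x\<bar> \<le> (\<Sum>i\<le>Polynomial.degree R. \<bar>Polynomial.coeff R i\<bar>) * (x + 1) ^ Polynomial.degree R"
proof -
  have "\<bar>poly R x\<bar> \<le> (\<Sum>i\<le>Polynomial.degree R. \<bar>Polynomial.coeff R i * x ^ i\<bar>)"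
    unfolding poly_altdef by (rule sum_abs)
  also have "\<dots> \<le> (\<Sum>i\<le>Polynomial.degree R. \<bar>Polynomial.coeff R i\<bar> * (x + 1) ^ Polynomial.degree R)"
  proof (rule sum_mono)
    fix i assume "i \<in> {..Polynomial.degree R}"
    have "x ^ i \<le> (x + 1) ^ i"
      using assms by (intro power_mono) auto
    also have "\<dots> \<le> (x + 1) ^ Polynomial.degree R"
      using assms \<open>i \<in> {..Polynomial.degree R}\<close> by (intro power_increasing) auto
    finally have "x ^ i \<le> (x + 1) ^ Polynomial.degree R" .
    then show "\<bar>Polynomial.coeff R i * x ^ i\<bar> \<le> \<bar>Polynomial.coeff R i\<bar> * (x + 1) ^ Polynomial.degree R"
      using assms by (simp add: abs_mult mult_left_mono)
  qed
  also have "\<dots> = (\<Sum>i\<le>Polynomial.degree R. \<bar>Polynomial.coeff R i\<bar>) * (x + 1) ^ Polynomial.degree R"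
    by (simp add: sum_distrib_right)
  finally show ?thesis .
qed

lemma eventually_mult_power_less_two_power:
  fixes c :: real
  shows "eventually (\<lambda>n. c * real n ^ d < 2 ^ n) sequentially"
proof -
  have "filterlim (\<lambda>n. ln 2 * real n) at_top sequentially"
    by (intro filterlim_tendsto_pos_mult_at_top[OF tendsto_const] filterlim_real_sequentially) simp
  with tendsto_power_div_exp_0
  have "((\<lambda>n. (ln 2 * real n) ^ d / exp (ln 2 * real n)) \<longlongrightarrow> 0) sequentially"
    by (rule filterlim_compose)
  then have "((\<lambda>n. c / ln 2 ^ d * ((ln 2 * real n) ^ d / exp (ln 2 * real n))) \<longlongrightarrow> 0) sequentially"
    by (rule tendsto_mult_right_zero)
  moreover have "c / ln 2 ^ d * ((ln 2 * real n) ^ d / exp (ln 2 * real n)) = c * real n ^ d / 2 ^ n"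
    for n :: nat
    by (simp add: power_mult_distrib exp_of_nat_mult mult.commute[of "ln 2"])
  ultimately have "((\<lambda>n. c * real n ^ d / 2 ^ n) \<longlongrightarrow> 0) sequentially"
    by simp
  then have "eventually (\<lambda>n. c * real n ^ d / 2 ^ n < 1) sequentially"
    by (rule order_tendstoD) simp
  then show ?thesis
    by (rule eventually_mono) (simp add: divide_less_eq)
qed

lemma abs_poly_less_two_power_on_linear_range:
  fixes R :: "int poly" and C0 C1 :: nat
  obtains N where "\<And>n x. N \<le> n \<Longrightarrow> x \<le> C0 + C1 * n \<Longrightarrow> \<bar>poly R (int x)\<bar> < 2 ^ n"
proof -
  define S d C where "S = (\<Sum>i\<le>Polynomial.degree R. \<bar>Polynomial.coeff R i\<bar>)" and "d = Polynomial.degree R"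
    and "C = C0 + C1 + 1"
  obtain N where N: "\<And>n. N \<le> n \<Longrightarrow> real_of_int S * real C ^ d * real n ^ d < 2 ^ n"
    using eventually_mult_power_less_two_power[of "real_of_int S * real C ^ d" d]
    unfolding eventually_sequentially by blast
  have "\<bar>poly R (int x)\<bar> < 2 ^ n" if "max N 1 \<le> n" "x \<le> C0 + C1 * n" for n x
  proof -
    have "1 \<le> n" "C0 \<le> C0 * n"
      using that(1) by simp_all
    then have "x + 1 \<le> C0 * n + C1 * n + n"
      using that(2) by linarith
    then have "x + 1 \<le> C * n"
      by (simp add: C_def algebra_simps)
    then have "real_of_int S * (real x + 1) ^ d \<le> real_of_int S * (real C * real n) ^ d"
      by (intro mult_left_mono power_mono) (auto simp: S_def sum_nonneg simp flip: of_nat_mult)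
    also have "\<dots> < 2 ^ n"
      using N[of n] that by (simp add: power_mult_distrib mult.assoc)
    finally have "real_of_int (S * (int x + 1) ^ d) < real_of_int (2 ^ n)"
      by simp
    moreover have "\<bar>poly R (int x)\<bar> \<le> S * (int x + 1) ^ d"
      using abs_poly_le_coeff_sum[of "int x" R] by (simp add: S_def d_def)
    ultimately show ?thesis
      by linarith
  qed
  with that show ?thesis
    by blast
qed

lemma not_prime_power_dvd_poly_on_linear_range:
  fixes R :: "int poly" and p C0 C1 :: nat
  assumes "R \<noteq> 0" "2 \<le> p"
  obtains X where "\<And>n y. X \<le> y \<Longrightarrow> y \<le> C0 + C1 * n \<Longrightarrow> \<not> int p ^ n dvd poly R (int y)"
proof -
  have "finite (int -` {x. poly R x = 0})"
    using poly_roots_finite[OF assms(1)] by (rule finite_vimageI) (simp add: inj_def)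
  then obtain Z where "int -` {x. poly R x = 0} \<subseteq> {..<Z}"
    using finite_nat_bounded by blast
  then have Z: "poly R (int y) \<noteq> 0" if "Z \<le> y" for y
    using that by auto
  obtain N where N: "\<And>n y. N \<le> n \<Longrightarrow> y \<le> C0 + C1 * n \<Longrightarrow> \<bar>poly R (int y)\<bar> < 2 ^ n"
    using abs_poly_less_two_power_on_linear_range by blast
  show ?thesis
  proof (rule that)
    fix n y assume y: "C0 + C1 * N + Z + 1 \<le> y" "y \<le> C0 + C1 * n"
    have "N \<le> n"
    proof (rule ccontr)
      assume "\<not> N \<le> n"
      then have "C1 * n \<le> C1 * N"
        by simp
      with y show False
        by linarith
    qed
    show "\<not> int p ^ n dvd poly R (int y)"
    proof
      assume "int p ^ n dvd poly R (int y)"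
      with Z[of y] y(1) have "\<bar>int p ^ n\<bar> \<le> \<bar>poly R (int y)\<bar>"
        by (intro dvd_imp_le_int) auto
      moreover have "\<bar>poly R (int y)\<bar> < 2 ^ n"
        using N[OF \<open>N \<le> n\<close> y(2)] .
      moreover have "(2::int) ^ n \<le> int p ^ n"
        using assms(2) by (intro power_mono) auto
      ultimately show False
        by simp
    qed
  qed
qed

lemma funpow_poly_minus_id_nonzero:
  fixes p :: nat
  assumes "prime p" "int p dvd deriv_iter f l z"
  obtains R where "R \<noteq> 0" "\<And>x. poly R x = (poly f ^^ l) x - x"
proof -
  obtain g where g: "\<forall>x. poly g x = (poly f ^^ l) x"
    using funpow_poly_is_poly by blast
  define R where "R = g - [:0, 1:]"
  have R_eval: "poly R x = (poly f ^^ l) x - x" for x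
    by (simp add: R_def g)
  have "R \<noteq> 0"
  proof
    \<comment> \<open>If \<open>f\<^sup>l\<close> were the identity, its derivative would be \<open>1\<close>, which \<open>p\<close> does not divide.\<close>
    assume "R = 0"
    then have id: "(poly f ^^ l) x = x" for x
      using R_eval[of x] by simp
    have "[z + int p = z] (mod int p)"
      by (simp add: cong_def)
    from funpow_poly_taylor_cong[OF this, where f = f and k = l]
    have "int p * int p dvd int p * (1 - deriv_iter f l z)"
      by (simp add: id cong_iff_dvd_diff power2_eq_square algebra_simps)
    then have "int p dvd 1 - deriv_iter f l z"
      using prime_gt_0_nat[OF assms(1)] by simp
    then have "int p dvd (1 - deriv_iter f l z) + deriv_iter f l z"
      using assms(2) by (rule dvd_add)
    with assms(1) show False
      by simp
  qed
  with R_eval that show ?thesis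
    by blast
qed

lemma cong_int_prime_power_modulus:
  fixes y Y D p :: nat
  assumes "[y = Y] (mod D * p ^ n)"
  shows "[int y = int Y] (mod int p ^ n)"
proof -
  have "[y = Y] (mod p ^ n)"
    using assms by (rule cong_dvd_modulus_nat) simp
  then show ?thesis
    by (simp add: cong_int_iff flip: of_nat_power)
qed

lemma attracting_cycle_transfer:
  fixes p :: nat
  assumes "prime p" and periodic: "orbit_periodic_mod f a (int p) l T"
    and attracting: "int p dvd deriv_iter f l (orbit f a T)"
  obtains X where "\<And>n y Y. 1 \<le> n \<Longrightarrow> X \<le> y \<Longrightarrow> T + n * l \<le> Y \<Longrightarrow> [y = Y] (mod l * p ^ n)
      \<Longrightarrow> [orbit f a Y = int Y] (mod int p ^ n) \<Longrightarrow> [orbit f a y = int y] (mod int p ^ n)"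
proof -
  obtain R where "R \<noteq> 0" and R_eval: "\<And>x. poly R x = (poly f ^^ l) x - x"
    using funpow_poly_minus_id_nonzero[OF assms(1) attracting] by blast
  obtain X where X: "\<And>n y. X \<le> y \<Longrightarrow> y \<le> T + l * n \<Longrightarrow> \<not> int p ^ n dvd poly R (int y)"
    using not_prime_power_dvd_poly_on_linear_range[OF \<open>R \<noteq> 0\<close> prime_ge_2_nat[OF assms(1)]]
    by blast
  show ?thesis
  proof (rule that)
    fix n y Y
    assume n: "1 \<le> n" and y: "X \<le> y" and Y: "T + n * l \<le> Y"
      and yY: "[y = Y] (mod l * p ^ n)" and fixed: "[orbit f a Y = int Y] (mod int p ^ n)"
    have periodic_n: "orbit_periodic_mod f a (int p ^ n) l (T + (n - 1) * l)"
      using orbit_periodic_prime_powers_attracting[OF periodic attracting n] .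
    have tail: "T + (n - 1) * l \<le> T + n * l"
      by simp
    have yY_int: "[int y = int Y] (mod int p ^ n)"
      using yY by (rule cong_int_prime_power_modulus)
    \<comment> \<open>\<open>Y\<close> is a zero of \<open>f\<^sup>l(x) - x\<close> modulo \<open>p\<^sup>n\<close>, hence so is \<open>y\<close>, which forces \<open>y\<close> beyond the preperiod.\<close>
    have "[(poly f ^^ l) (int Y) = (poly f ^^ l) (orbit f a Y)] (mod int p ^ n)"
      using fixed by (intro cong_funpow_poly) (rule cong_sym)
    also have "(poly f ^^ l) (orbit f a Y) = orbit f a (Y + l)"
      by (simp add: orbit_add)
    also have "[orbit f a (Y + l) = orbit f a Y] (mod int p ^ n)"
      using periodic_n le_trans[OF tail Y] by (rule orbit_periodic_modD)
    also note fixed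
    finally have "int p ^ n dvd poly R (int Y)"
      by (simp add: R_eval cong_iff_dvd_diff)
    moreover have "[poly R (int y) = poly R (int Y)] (mod int p ^ n)"
      using yY_int by (rule cong_poly)
    ultimately have "int p ^ n dvd poly R (int y)"
      by (simp add: cong_dvd_iff)
    with X[OF y, of n] have "\<not> y \<le> T + l * n"
      by blast
    then have "T + n * l \<le> y"
      by (simp add: mult.commute)
    have "[y = Y] (mod l)"
      using yY by (rule cong_dvd_modulus_nat) simp
    with periodic_n le_trans[OF tail \<open>T + n * l \<le> y\<close>] le_trans[OF tail Y]
    show "[orbit f a y = int y] (mod int p ^ n)"
      using yY_int fixed by (rule orbit_periodic_mod_transfer)
  qed
qed

text \<open>
  The tail \<open>T + n B\<close> beyond which the orbit has period \<open>Q p\<^sup>n\<^sup>-\<^sup>1\<close> modulo \<open>p\<^sup>n\<close> grows with \<open>n\<close>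
  when the cycle modulo \<open>p\<close> is attracting, whereas the bound \<open>X\<close> from which on solutions are
  inherited does not.
\<close>
definition orbit_tower_data :: "int poly \<Rightarrow> int \<Rightarrow> nat \<Rightarrow> nat \<Rightarrow> nat \<Rightarrow> nat \<Rightarrow> nat \<Rightarrow> bool" where
  "orbit_tower_data f a p Q T B X \<longleftrightarrow>
     (\<forall>n\<ge>1. orbit_periodic_mod f a (int p ^ n) (Q * p ^ (n - 1)) (T + n * B)) \<and>
     (\<forall>n y Y. 1 \<le> n \<longrightarrow> X \<le> y \<longrightarrow> T + n * B \<le> Y \<longrightarrow> [y = Y] (mod Q * p ^ n) \<longrightarrow>
        [orbit f a Y = int Y] (mod int p ^ n) \<longrightarrow> [orbit f a y = int y] (mod int p ^ n))"

lemma orbit_tower_data_attracting: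
  fixes p :: nat
  assumes "prime p" and periodic: "orbit_periodic_mod f a (int p) l T"
    and attracting: "int p dvd deriv_iter f l (orbit f a T)"
  obtains X where "orbit_tower_data f a p (l * (p - 1)) T l X"
proof -
  obtain X where X: "\<And>n y Y. 1 \<le> n \<Longrightarrow> X \<le> y \<Longrightarrow> T + n * l \<le> Y \<Longrightarrow> [y = Y] (mod l * p ^ n)
      \<Longrightarrow> [orbit f a Y = int Y] (mod int p ^ n) \<Longrightarrow> [orbit f a y = int y] (mod int p ^ n)"
    using attracting_cycle_transfer[OF assms] by blast
  have periodic_n: "orbit_periodic_mod f a (int p ^ n) (l * (p - 1) * p ^ (n - 1)) (T + n * l)"
    if "1 \<le> n" for n
  proof -
    have "orbit_periodic_mod f a (int p ^ n) ((p - 1) * p ^ (n - 1) * l) (T + (n - 1) * l)"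
      using orbit_periodic_prime_powers_attracting[OF periodic attracting that]
      by (rule orbit_periodic_mod_mult)
    moreover have "T + (n - 1) * l \<le> T + n * l"
      by simp
    moreover have "l * (p - 1) * p ^ (n - 1) = (p - 1) * p ^ (n - 1) * l"
      by simp
    ultimately show ?thesis
      by (simp only:) (rule orbit_periodic_mod_mono)
  qed
  have transfer: "[orbit f a y = int y] (mod int p ^ n)"
    if "1 \<le> n" "X \<le> y" "T + n * l \<le> Y" "[y = Y] (mod l * (p - 1) * p ^ n)"
      "[orbit f a Y = int Y] (mod int p ^ n)" for n y Y
  proof -
    have "[y = Y] (mod l * p ^ n)"
      using that(4) by (rule cong_dvd_modulus_nat) simp
    with that show ?thesis
      using X by blast
  qed
  show ?thesis
    using that periodic_n transfer unfolding orbit_tower_data_def by blast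
qed

lemma orbit_tower_data_indifferent:
  fixes p :: nat
  assumes "prime p" and periodic: "orbit_periodic_mod f a (int p) l T"
    and indifferent: "\<not> int p dvd deriv_iter f l (orbit f a T)"
  shows "orbit_tower_data f a p (l * (p - 1)) T 0 T"
proof -
  have periodic_n: "orbit_periodic_mod f a (int p ^ n) (l * (p - 1) * p ^ (n - 1)) T"
    if "1 \<le> n" for n
    using orbit_periodic_prime_powers_indifferent[OF assms that] .
  have transfer: "[orbit f a y = int y] (mod int p ^ n)"
    if "1 \<le> n" "T \<le> y" "T \<le> Y" "[y = Y] (mod l * (p - 1) * p ^ n)"
      "[orbit f a Y = int Y] (mod int p ^ n)" for n y Y
  proof -
    have "[y = Y] (mod l * (p - 1) * p ^ (n - 1))"
      using that(4) by (rule cong_dvd_modulus_nat) (simp add: le_imp_power_dvd)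
    from orbit_periodic_mod_transfer[OF periodic_n that(2,3) this
        cong_int_prime_power_modulus[OF that(4)] that(5)] that(1)
    show ?thesis
      by simp
  qed
  show ?thesis
    unfolding orbit_tower_data_def mult_0_right add_0_right
    using periodic_n transfer by blast
qed

section \<open>The cycle modulo a prime\<close>

lemma funpow_closed: "\<forall>x\<in>F. \<sigma> x \<in> F \<Longrightarrow> y \<in> F \<Longrightarrow> (\<sigma> ^^ k) y \<in> F"
  by (induction k) auto

lemma cycle_length_properties:
  fixes \<sigma> :: "'a \<Rightarrow> 'a"
  assumes "finite F" "\<forall>x\<in>F. \<sigma> x \<in> F" "y \<in> F"
  shows "1 \<le> cycle_length \<sigma> y" "cycle_length \<sigma> y \<le> card F"
    and "\<exists>k. (\<sigma> ^^ k) y = (\<sigma> ^^ (k + cycle_length \<sigma> y)) y"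
proof -
  have "\<not> inj_on (\<lambda>k. (\<sigma> ^^ k) y) {0..card F}"
  proof
    assume "inj_on (\<lambda>k. (\<sigma> ^^ k) y) {0..card F}"
    then have "card {0..card F} \<le> card F"
      using assms by (intro card_inj_on_le) (auto intro: funpow_closed)
    then show False by simp
  qed
  then obtain i j where ij: "i < j" "j \<le> card F" "(\<sigma> ^^ i) y = (\<sigma> ^^ j) y"
    unfolding inj_on_def by (metis atLeastAtMost_iff linorder_neqE_nat)
  define P where "P l \<longleftrightarrow> 1 \<le> l \<and> (\<exists>k. (\<sigma> ^^ k) y = (\<sigma> ^^ (k + l)) y)" for l
  have "P (j - i)"
    unfolding P_def using ij by (intro conjI exI[of _ i]) auto
  then have "P (cycle_length \<sigma> y)" "cycle_length \<sigma> y \<le> j - i"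
    unfolding cycle_length_def P_def[symmetric] by (rule LeastI, rule Least_le)
  with ij show "1 \<le> cycle_length \<sigma> y" "cycle_length \<sigma> y \<le> card F"
    and "\<exists>k. (\<sigma> ^^ k) y = (\<sigma> ^^ (k + cycle_length \<sigma> y)) y"
    by (auto simp: P_def)
qed

lemma is_full_cycle_if_periodic_orbit:
  fixes \<sigma> :: "'a \<Rightarrow> 'a"
  assumes fin: "finite F" and closed: "\<forall>x\<in>F. \<sigma> x \<in> F" and "0 < n"
    and u_periodic: "(\<sigma> ^^ n) u = u" and F_eq: "(\<lambda>i. (\<sigma> ^^ i) u) ` {..<n} = F"
  shows "is_full_cycle \<sigma> F"
proof -
  have "u \<in> F"
    using F_eq \<open>0 < n\<close> by force
  have "F \<subseteq> \<sigma> ` F"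
  proof
    fix x assume "x \<in> F"
    then obtain i where "x = (\<sigma> ^^ i) u"
      using F_eq by auto
    also have "\<dots> = (\<sigma> ^^ (i + n)) u"
      using u_periodic by (simp add: funpow_add)
    also have "\<dots> = (\<sigma> ^^ Suc (i + n - 1)) u"
      using \<open>0 < n\<close> by simp
    also have "\<dots> = \<sigma> ((\<sigma> ^^ (i + n - 1)) u)"
      by simp
    finally show "x \<in> \<sigma> ` F"
      using closed \<open>u \<in> F\<close> by (auto intro: funpow_closed)
  qed
  then have "bij_betw \<sigma> F F"
    using fin closed finite_surj_inj[OF fin] by (auto simp: bij_betw_def)
  moreover have "\<exists>m. (\<sigma> ^^ m) x = x'" if "x \<in> F" "x' \<in> F" for x x'
  proof -
    obtain i j where "i < n" "x = (\<sigma> ^^ i) u" "x' = (\<sigma> ^^ j) u"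
      using F_eq \<open>x \<in> F\<close> \<open>x' \<in> F\<close> by blast
    then have "(\<sigma> ^^ (j + (n - i))) x = (\<sigma> ^^ j) ((\<sigma> ^^ n) u)"
      by (simp add: funpow_add_apply)
    then have "(\<sigma> ^^ (j + (n - i))) x = x'"
      using u_periodic \<open>x' = (\<sigma> ^^ j) u\<close> by simp
    then show ?thesis ..
  qed
  ultimately show ?thesis
    using closed by (simp add: is_full_cycle_def)
qed

lemma is_full_cycle_if_cycle_length_eq_card:
  fixes \<sigma> :: "'a \<Rightarrow> 'a"
  assumes fin: "finite F" and closed: "\<forall>x\<in>F. \<sigma> x \<in> F" and "y \<in> F"
    and len: "cycle_length \<sigma> y = card F"
  shows "is_full_cycle \<sigma> F"
proof -
  define n where "n = card F"
  obtain k where k: "(\<sigma> ^^ k) y = (\<sigma> ^^ (k + n)) y"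
    using cycle_length_properties(3)[OF fin closed \<open>y \<in> F\<close>] len n_def by auto
  have "0 < n"
    using cycle_length_properties(1)[OF fin closed \<open>y \<in> F\<close>] len n_def by simp
  define u where "u = (\<sigma> ^^ k) y"
  have "(\<sigma> ^^ n) u = (\<sigma> ^^ (n + k)) y"
    by (simp add: u_def funpow_add)
  then have u_periodic: "(\<sigma> ^^ n) u = u"
    using k by (simp add: u_def add.commute)
  have "inj_on (\<lambda>i. (\<sigma> ^^ i) u) {..<n}"
  proof (rule linorder_inj_onI')
    fix i j assume "i \<in> {..<n}" "j \<in> {..<n}" "i < j"
    show "(\<sigma> ^^ i) u \<noteq> (\<sigma> ^^ j) u"
    proof
      assume "(\<sigma> ^^ i) u = (\<sigma> ^^ j) u"
      then have "(\<sigma> ^^ (k + i)) y = (\<sigma> ^^ ((k + i) + (j - i))) y"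
        using \<open>i < j\<close> by (simp add: u_def funpow_add_apply add.commute)
      moreover have "1 \<le> j - i"
        using \<open>i < j\<close> by simp
      ultimately have "cycle_length \<sigma> y \<le> j - i"
        unfolding cycle_length_def by (blast intro: Least_le)
      with \<open>j \<in> {..<n}\<close> len n_def show False
        by simp
    qed
  qed
  then have "(\<lambda>i. (\<sigma> ^^ i) u) ` {..<n} = F"
    using fin closed \<open>y \<in> F\<close> by (intro card_subset_eq) (auto simp: card_image n_def u_def funpow_closed)
  with fin closed \<open>0 < n\<close> u_periodic show ?thesis
    by (rule is_full_cycle_if_periodic_orbit)
qed

lemma funpow_red_map: "(red_map f m ^^ k) (a mod m) = orbit f a k mod m"
proof (induction k)
  case (Suc k)
  have "poly f (orbit f a k mod m) mod m = poly f (orbit f a k) mod m"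
    using cong_poly[of "orbit f a k mod m" "orbit f a k" m f] by (simp add: cong_def)
  with Suc show ?case
    by (simp add: red_map_def orbit_def)
qed (simp add: orbit_def)

lemma orbit_periodic_mod_cycle_length:
  fixes m :: int
  assumes "0 < m"
  obtains T where "orbit_periodic_mod f a m (cycle_length (red_map f m) (a mod m)) T"
proof -
  define \<sigma> l where "\<sigma> = red_map f m" and "l = cycle_length \<sigma> (a mod m)"
  have closed: "\<forall>x\<in>residues_set m. \<sigma> x \<in> residues_set m"
    using assms by (simp add: \<sigma>_def red_map_def residues_set_def)
  have "a mod m \<in> residues_set m"
    using assms by (simp add: residues_set_def)
  then obtain k where k: "(\<sigma> ^^ k) (a mod m) = (\<sigma> ^^ (k + l)) (a mod m)"
    using cycle_length_properties(3)[OF _ closed] by (auto simp: l_def residues_set_def)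
  have "orbit_periodic_mod f a m l k"
    unfolding orbit_periodic_mod_def
  proof (intro allI impI)
    fix y assume "k \<le> y"
    then have "(\<sigma> ^^ (y + l)) (a mod m) = (\<sigma> ^^ (y - k)) ((\<sigma> ^^ (k + l)) (a mod m))"
      by (simp add: funpow_add_apply)
    also have "\<dots> = (\<sigma> ^^ (y - k)) ((\<sigma> ^^ k) (a mod m))"
      by (simp add: k)
    also have "\<dots> = (\<sigma> ^^ y) (a mod m)"
      using \<open>k \<le> y\<close> by (simp add: funpow_add_apply)
    finally show "[orbit f a (y + l) = orbit f a y] (mod m)"
      by (simp add: \<sigma>_def funpow_red_map cong_def)
  qed
  with that show ?thesis
    by (simp add: \<sigma>_def l_def)
qed

lemma orbit_mod_prime_cycle:
  assumes "tower_stable f" "f_valid f b" "prime p" "p dvd b"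
  obtains l T where "0 < l" "l < p" "\<And>q. prime q \<Longrightarrow> q dvd l \<Longrightarrow> q dvd b"
    and "orbit_periodic_mod f a (int p) l T"
proof -
  define \<sigma> F l where "\<sigma> = red_map f (int p)" and "F = residues_set (int p)"
    and "l = cycle_length \<sigma> (a mod int p)"
  have p_pos: "0 < int p"
    using assms(3) prime_gt_0_nat by simp
  have fin: "finite F" and card: "card F = p" and "a mod int p \<in> F"
    using p_pos by (simp_all add: F_def residues_set_def)
  have closed: "\<forall>x\<in>F. \<sigma> x \<in> F"
    using p_pos by (simp add: \<sigma>_def F_def red_map_def residues_set_def)
  have "1 \<le> l" "l \<le> p"
    using cycle_length_properties[OF fin closed \<open>a mod int p \<in> F\<close>] card by (simp_all add: l_def)
  moreover have "l \<noteq> p"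
    using is_full_cycle_if_cycle_length_eq_card[OF fin closed \<open>a mod int p \<in> F\<close>] assms(1,3) card
    by (auto simp: tower_stable_def l_def \<sigma>_def F_def)
  moreover have "q dvd b" if "prime q" "q dvd l" for q
  proof -
    have "l dvd lambda_f f p"
      unfolding lambda_f_def period_def using \<open>a mod int p \<in> F\<close>
      by (auto simp: l_def \<sigma>_def F_def intro: dvd_Lcm)
    with \<open>q dvd l\<close> have "q dvd lambda_f f p"
      by (rule dvd_trans)
    with \<open>prime q\<close> assms(2-4) show ?thesis
      unfolding f_valid_def by blast
  qed
  moreover obtain T where "orbit_periodic_mod f a (int p) l T"
    using orbit_periodic_mod_cycle_length[OF p_pos] by (auto simp: l_def \<sigma>_def)
  ultimately show ?thesis
    by (intro that[of l T]) auto
qed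

lemma cycle_period_prime_factors:
  fixes p l q :: nat
  assumes "valid b" "prime p" "p dvd b" "0 < l" "l < p" "\<And>q. prime q \<Longrightarrow> q dvd l \<Longrightarrow> q dvd b"
    and "prime q" "q dvd l * (p - 1)"
  shows "q < p \<and> q dvd b"
proof -
  from assms(7,8) have "q dvd l \<or> q dvd p - 1"
    by (simp add: prime_dvd_mult_iff)
  then show ?thesis
  proof
    assume "q dvd l"
    then show ?thesis
      using assms(4-7) dvd_imp_le[of q l] by fastforce
  next
    assume "q dvd p - 1"
    then have "q < p"
      using dvd_imp_le[of q "p - 1"] prime_gt_1_nat[OF assms(2)] by fastforce
    moreover have "q dvd b"
      using assms(1-3,7) \<open>q dvd p - 1\<close> unfolding valid_def by blast
    ultimately show ?thesis ..
  qed
qed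

lemma orbit_tower_data_exists:
  assumes "tower_stable f" "f_valid f b" "prime p" "p dvd b"
  shows "\<exists>Q T B X. 0 < Q \<and> (\<forall>q. prime q \<longrightarrow> q dvd Q \<longrightarrow> q < p \<and> q dvd b) \<and>
    orbit_tower_data f a p Q T B X"
proof -
  obtain l T where l: "0 < l" "l < p" "\<And>q. prime q \<Longrightarrow> q dvd l \<Longrightarrow> q dvd b"
    and periodic: "orbit_periodic_mod f a (int p) l T"
    using orbit_mod_prime_cycle[OF assms, where a = a] by blast
  have "valid b"
    using assms(2) by (simp add: f_valid_def)
  have "0 < l * (p - 1)"
    using l(1) prime_gt_1_nat[OF assms(3)] by simp
  moreover have "\<forall>q. prime q \<longrightarrow> q dvd l * (p - 1) \<longrightarrow> q < p \<and> q dvd b"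
    using cycle_period_prime_factors[OF \<open>valid b\<close> assms(3,4) l] by blast
  moreover have "\<exists>T B X. orbit_tower_data f a p (l * (p - 1)) T B X"
  proof (cases "int p dvd deriv_iter f l (orbit f a T)")
    case True
    then obtain X where "orbit_tower_data f a p (l * (p - 1)) T l X"
      using orbit_tower_data_attracting[OF assms(3) periodic] by blast
    then show ?thesis
      by blast
  next
    case False
    then show ?thesis
      using orbit_tower_data_indifferent[OF assms(3) periodic] by blast
  qed
  ultimately show ?thesis
    by blast
qed

section \<open>Solution classes modulo powers of \<open>b\<close>\<close>

lemma prod_prime_factors_squarefree:
  fixes b :: nat
  assumes "squarefree b"
  shows "\<Prod>(prime_factors b) = b"
proof -
  have "b \<noteq> 0"
    using assms by (intro notI) simp
  then have "b = (\<Prod>p\<in>prime_factors b. p ^ multiplicity p b)"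
    by (simp add: prime_factorization_nat)
  also have "\<dots> = \<Prod>(prime_factors b)"
    using assms squarefree_factorial_semiring'[OF \<open>b \<noteq> 0\<close>] by (intro prod.cong) auto
  finally show ?thesis ..
qed

lemma cong_squarefree_power:
  fixes b :: nat and x y :: int
  assumes "squarefree b" "\<And>p. p \<in> prime_factors b \<Longrightarrow> [x = y] (mod int p ^ n)"
  shows "[x = y] (mod int b ^ n)"
proof -
  have "[x = y] (mod (\<Prod>p\<in>prime_factors b. int p ^ n))"
  proof (rule cong_cong_prod_coprime)
    show "\<forall>p\<in>prime_factors b. \<forall>q\<in>prime_factors b. p \<noteq> q \<longrightarrow> coprime (int p ^ n) (int q ^ n)"
      by (auto intro: primes_coprime)
  qed (use assms(2) in blast)
  also have "(\<Prod>p\<in>prime_factors b. int p ^ n) = int b ^ n"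
    by (simp add: prod_prime_factors_squarefree[OF assms(1)] flip: prod_power_distrib of_nat_prod)
  finally show ?thesis .
qed

lemma dvd_power_if_prime_factors_dvd:
  fixes m c :: nat
  assumes "0 < m" "\<And>q. q \<in> prime_factors m \<Longrightarrow> q dvd c"
  shows "m dvd c ^ m"
proof (cases "c = 0")
  case False
  show ?thesis
  proof (rule multiplicity_le_imp_dvd)
    fix q :: nat assume "prime q"
    show "multiplicity q m \<le> multiplicity q (c ^ m)"
    proof (cases "q dvd m")
      case True
      then have "q dvd c"
        using assms \<open>prime q\<close> by (simp add: prime_factorsI)
      then have "0 < multiplicity q c"
        using False \<open>prime q\<close> by (simp add: prime_multiplicity_gt_zero_iff)
      have "m < q ^ m"
        using prime_ge_2_nat[OF \<open>prime q\<close>] less_exp[of m] power_mono[of 2 q m] by linarith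
      then have "\<not> q ^ m dvd m"
        using assms(1) by (auto dest: dvd_imp_le)
      then have "multiplicity q m < m"
        using multiplicity_lessI[of m q m] assms(1) not_prime_unit \<open>prime q\<close> by blast
      also have "m \<le> m * multiplicity q c"
        using \<open>0 < multiplicity q c\<close> by simp
      also have "\<dots> = multiplicity q (c ^ m)"
        using False \<open>prime q\<close> by (simp add: prime_elem_multiplicity_power_distrib)
      finally show ?thesis
        by simp
    qed (simp add: not_dvd_imp_multiplicity_0)
  qed (use assms(1) in simp)
qed (use assms(1) in \<open>simp add: zero_power\<close>)

lemma lcm_mult_power_Suc:
  fixes c u :: nat
  assumes "coprime c u"
  shows "lcm (c * u ^ k) (u ^ Suc k) = c * u ^ Suc k"
proof (rule dvd_antisym)
  show "lcm (c * u ^ k) (u ^ Suc k) dvd c * u ^ Suc k"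
    by (intro lcm_least mult_dvd_mono le_imp_power_dvd) simp_all
  have "c dvd lcm (c * u ^ k) (u ^ Suc k)"
    by (rule dvd_trans[OF _ dvd_lcm1]) simp
  moreover have "u ^ Suc k dvd lcm (c * u ^ k) (u ^ Suc k)"
    by (rule dvd_lcm2)
  ultimately show "c * u ^ Suc k dvd lcm (c * u ^ k) (u ^ Suc k)"
    using assms by (intro divides_mult) simp_all
qed

definition solution_class :: "int poly \<Rightarrow> int \<Rightarrow> nat \<Rightarrow> int \<Rightarrow> int \<Rightarrow> bool" where
  "solution_class f a T M r \<longleftrightarrow> (\<forall>y\<ge>T. [int y = r] (mod M) \<longrightarrow> [orbit f a y = int y] (mod M))"

lemma exists_ge_in_class:
  fixes M r :: int
  assumes "0 < M"
  obtains Y :: nat where "T \<le> Y" "[int Y = r] (mod M)"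
proof
  have "1 \<le> nat M"
    using assms by simp
  then have "T \<le> nat M * T"
    by simp
  then show "T \<le> nat (r mod M) + nat M * T"
    by linarith
  show "[int (nat (r mod M) + nat M * T) = r] (mod M)"
    using assms by (simp add: cong_def)
qed

lemma solution_class_lift:
  fixes M m :: int
  assumes sol: "solution_class f a T M r" and "0 < M"
    and periodic: "orbit_periodic_mod f a m D T'" and "int D dvd M"
  obtains r' where "[r' = r] (mod M)" "solution_class f a (max T T') (lcm M m) r'"
proof -
  obtain Y where Y: "max T T' \<le> Y" "[int Y = r] (mod M)"
    using exists_ge_in_class[OF \<open>0 < M\<close>] by blast
  have fixed: "[orbit f a Y = int Y] (mod M)"
    using sol Y by (simp add: solution_class_def)
  \<comment> \<open>Members of the class of \<open>f\<^sup>Y(a)\<close> agree with \<open>Y\<close> modulo \<open>M\<close>, hence modulo the period \<open>D\<close>.\<close>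
  show ?thesis
  proof (rule that)
    show "[orbit f a Y = r] (mod M)"
      using fixed Y(2) by (rule cong_trans)
    show "solution_class f a (max T T') (lcm M m) (orbit f a Y)"
      unfolding solution_class_def
    proof (intro allI impI)
      fix y assume y: "max T T' \<le> y" and cls: "[int y = orbit f a Y] (mod lcm M m)"
      have cls_M: "[int y = orbit f a Y] (mod M)" and cls_m: "[int y = orbit f a Y] (mod m)"
        using cls by (auto elim: cong_dvd_modulus)
      have yY: "[int y = int Y] (mod M)"
        using cls_M fixed by (rule cong_trans)
      then have "[int y = r] (mod M)"
        using Y(2) by (rule cong_trans)
      then have "[orbit f a y = int y] (mod M)"
        using sol y by (simp add: solution_class_def)
      moreover have "[orbit f a y = int y] (mod m)"
      proof -
        have "[int y = int Y] (mod int D)"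
          using yY \<open>int D dvd M\<close> by (rule cong_dvd_modulus)
        then have "[y = Y] (mod D)"
          by (simp add: cong_int_iff)
        with periodic y Y(1) have "[orbit f a y = orbit f a Y] (mod m)"
          by (intro orbit_periodic_mod_cong) auto
        then show ?thesis
          using cong_sym[OF cls_m] by (rule cong_trans)
      qed
      ultimately show "[orbit f a y = int y] (mod lcm M m)"
        by (rule cong_cong_lcm_int)
    qed
  qed
qed

lemma base_expansion_approximants:
  fixes b X :: nat and \<rho> :: "nat \<Rightarrow> int" and x :: "nat \<Rightarrow> nat"
  assumes "0 < b" and coherent: "\<And>n. [\<rho> (Suc n) = \<rho> n] (mod int b ^ n)"
    and x_def: "\<And>n. x n = X + nat ((\<rho> n - int X) mod int b ^ n)"
  shows "X \<le> x n" and "[int (x n) = \<rho> n] (mod int b ^ n)"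
    and "[\<rho> n = int X] (mod int b ^ n) \<Longrightarrow> x n = X"
    and "\<exists>c. 0 \<le> c \<and> c < int b \<and> int (x (Suc n)) = c * int b ^ n + int (x n)"
proof -
  define u where "u n = (\<rho> n - int X) mod int b ^ n" for n
  have u_nonneg: "0 \<le> u n" for n
    using assms(1) by (simp add: u_def)
  have x_eq: "int (x n) = int X + u n" for n
    using u_nonneg by (simp add: x_def u_def)
  show "X \<le> x n"
    by (simp add: x_def)
  show "[int (x n) = \<rho> n] (mod int b ^ n)"
    by (simp add: x_eq u_def cong_def mod_add_right_eq)
  show "[\<rho> n = int X] (mod int b ^ n) \<Longrightarrow> x n = X"
    by (simp add: x_def cong_iff_dvd_diff dvd_eq_mod_eq_0)
  define c where "c = (\<rho> (Suc n) - int X) div int b ^ n mod int b"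
  have "u (Suc n) = (\<rho> (Suc n) - int X) mod (int b ^ n * int b)"
    by (simp only: u_def power_Suc2)
  also have "\<dots> = int b ^ n * c + (\<rho> (Suc n) - int X) mod int b ^ n"
    unfolding c_def by (rule zmod_zmult2_eq) simp
  also have "(\<rho> (Suc n) - int X) mod int b ^ n = u n"
    using cong_diff[OF coherent cong_refl[of "int X"]] by (simp add: u_def cong_def)
  finally have "int (x (Suc n)) = c * int b ^ n + int (x n)"
    by (simp add: x_eq algebra_simps)
  moreover have "0 \<le> c" "c < int b"
    using assms(1) by (simp_all add: c_def)
  ultimately show "\<exists>c. 0 \<le> c \<and> c < int b \<and> int (x (Suc n)) = c * int b ^ n + int (x n)"
    by blast
qed

locale orbit_prime_data =
  fixes f :: "int poly" and a :: int and b :: nat and Q T B X :: "nat \<Rightarrow> nat"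
  assumes squarefree: "squarefree b"
    and Q_pos: "p \<in> prime_factors b \<Longrightarrow> 0 < Q p"
    and Q_prime_factors: "p \<in> prime_factors b \<Longrightarrow> prime q \<Longrightarrow> q dvd Q p \<Longrightarrow> q < p \<and> q dvd b"
    and tower_data: "p \<in> prime_factors b \<Longrightarrow> orbit_tower_data f a p (Q p) (T p) (B p) (X p)"
begin

lemma b_pos: "0 < b"
  using squarefree by (intro gr0I) simp

lemma periodic: "p \<in> prime_factors b \<Longrightarrow> 1 \<le> n \<Longrightarrow>
    orbit_periodic_mod f a (int p ^ n) (Q p * p ^ (n - 1)) (T p + n * B p)"
  using tower_data by (simp add: orbit_tower_data_def)

lemma transfer: "p \<in> prime_factors b \<Longrightarrow> 1 \<le> n \<Longrightarrow> X p \<le> y \<Longrightarrow> T p + n * B p \<le> Y \<Longrightarrow>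
    [y = Y] (mod Q p * p ^ n) \<Longrightarrow> [orbit f a Y = int Y] (mod int p ^ n) \<Longrightarrow>
    [orbit f a y = int y] (mod int p ^ n)"
  using tower_data unfolding orbit_tower_data_def by blast

definition K :: nat where
  "K = (\<Prod>p\<in>prime_factors b. Q p)"

definition tail :: "nat \<Rightarrow> nat" where
  "tail n = (\<Sum>p\<in>prime_factors b. T p + n * B p)"

definition X0 :: nat where
  "X0 = (\<Sum>p\<in>prime_factors b. X p)"

lemma K_pos: "0 < K"
  unfolding K_def using Q_pos by (simp add: prod_pos)

lemma Q_le_K: "p \<in> prime_factors b \<Longrightarrow> Q p \<le> K"
  unfolding K_def using K_pos by (intro dvd_imp_le dvd_prodI) (simp_all add: K_def)

lemma tail_ge: "p \<in> prime_factors b \<Longrightarrow> T p + n * B p \<le> tail n"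
  unfolding tail_def by (intro member_le_sum) simp_all

lemma tail_mono: "n \<le> m \<Longrightarrow> tail n \<le> tail m"
  unfolding tail_def by (intro sum_mono) simp

lemma X_le_X0: "p \<in> prime_factors b \<Longrightarrow> X p \<le> X0"
  unfolding X0_def by (intro member_le_sum) simp_all

lemma prime_power_dvd_b_power: "p \<in> prime_factors b \<Longrightarrow> int p ^ n dvd int b ^ n"
  by (intro dvd_power_same) auto

lemma Q_mult_prime_power_dvd_b_power:
  assumes p: "p \<in> prime_factors b" and "K \<le> n"
  shows "Q p * p ^ n dvd b ^ n"
proof (rule divides_mult)
  have "Q p dvd b ^ Q p"
    using Q_pos[OF p] Q_prime_factors[OF p] by (intro dvd_power_if_prime_factors_dvd) auto
  also have "b ^ Q p dvd b ^ n"
    using Q_le_K[OF p] \<open>K \<le> n\<close> by (intro le_imp_power_dvd) simp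
  finally show "Q p dvd b ^ n" .
  show "p ^ n dvd b ^ n"
    using p by (intro dvd_power_same) auto
  have "prime p"
    using p by auto
  have "\<not> p dvd Q p"
    using Q_prime_factors[OF p \<open>prime p\<close>] by blast
  then have "coprime p (Q p)"
    using \<open>prime p\<close> by (rule prime_imp_coprime[rotated])
  then show "coprime (Q p) (p ^ n)"
    by (simp add: coprime_commute)
qed

lemma periodic_mod_b_power:
  assumes "K \<le> n"
  shows "orbit_periodic_mod f a (int b ^ Suc n) (b ^ n) (tail (Suc n))"
  unfolding orbit_periodic_mod_def
proof (intro allI impI)
  fix y assume y: "tail (Suc n) \<le> y"
  show "[orbit f a (y + b ^ n) = orbit f a y] (mod int b ^ Suc n)"
  proof (rule cong_squarefree_power[OF squarefree])
    fix p assume p: "p \<in> prime_factors b"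
    have "orbit_periodic_mod f a (int p ^ Suc n) (Q p * p ^ n) (T p + Suc n * B p)"
      using periodic[OF p, of "Suc n"] by simp
    then have "orbit_periodic_mod f a (int p ^ Suc n) (b ^ n) (T p + Suc n * B p)"
      using Q_mult_prime_power_dvd_b_power[OF p assms] by (rule orbit_periodic_mod_dvd_period)
    then show "[orbit f a (y + b ^ n) = orbit f a y] (mod int p ^ Suc n)"
      using le_trans[OF tail_ge[OF p] y] by (rule orbit_periodic_modD)
  qed
qed

lemma solution_class_uniform_tail:
  assumes "K \<le> n" "solution_class f a T' (int b ^ n) r"
  shows "solution_class f a X0 (int b ^ n) r"
  unfolding solution_class_def
proof (intro allI impI)
  fix y assume y: "X0 \<le> y" and cls: "[int y = r] (mod int b ^ n)"
  define Y where "Y = y + b ^ n * (T' + tail n)"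
  have "T' + tail n \<le> Y"
    using b_pos by (simp add: Y_def trans_le_add2)
  have yY: "[y = Y] (mod b ^ n)"
    by (simp add: Y_def cong_def)
  then have "[int y = int Y] (mod int b ^ n)"
    by (simp add: cong_int_iff flip: of_nat_power)
  from cong_sym[OF this] cls have "[int Y = r] (mod int b ^ n)"
    by (rule cong_trans)
  then have fixed: "[orbit f a Y = int Y] (mod int b ^ n)"
    using assms(2) \<open>T' + tail n \<le> Y\<close> by (simp add: solution_class_def)
  have "1 \<le> n"
    using K_pos assms(1) by simp
  show "[orbit f a y = int y] (mod int b ^ n)"
  proof (rule cong_squarefree_power[OF squarefree])
    fix p assume p: "p \<in> prime_factors b"
    show "[orbit f a y = int y] (mod int p ^ n)"
    proof (rule transfer[OF p \<open>1 \<le> n\<close>])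
      show "X p \<le> y"
        using X_le_X0[OF p] y by simp
      show "T p + n * B p \<le> Y"
        using tail_ge[OF p, of n] \<open>T' + tail n \<le> Y\<close> by simp
      show "[y = Y] (mod Q p * p ^ n)"
        using yY Q_mult_prime_power_dvd_b_power[OF p assms(1)] by (rule cong_dvd_modulus_nat)
      show "[orbit f a Y = int Y] (mod int p ^ n)"
        using fixed prime_power_dvd_b_power[OF p] by (rule cong_dvd_modulus)
    qed
  qed
qed

lemma solution_class_step:
  assumes "K \<le> n" "solution_class f a X0 (int b ^ n) r"
  obtains r' where "[r' = r] (mod int b ^ n)" "solution_class f a X0 (int b ^ Suc n) r'"
proof -
  have "0 < int b ^ n"
    using b_pos by simp
  from solution_class_lift[OF assms(2) this periodic_mod_b_power[OF assms(1)]]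
  obtain r' where "[r' = r] (mod int b ^ n)"
    and "solution_class f a (max X0 (tail (Suc n))) (lcm (int b ^ n) (int b ^ Suc n)) r'"
    by auto
  moreover have "lcm (int b ^ n) (int b ^ Suc n) = int b ^ Suc n"
    by (simp add: le_imp_power_dvd)
  ultimately show ?thesis
    using that solution_class_uniform_tail[of "Suc n"] assms(1) by simp
qed

lemma Q_dvd_power_primes_below:
  assumes "u \<in> prime_factors b"
  shows "Q u dvd (\<Prod>{q \<in> prime_factors b. q < u}) ^ K"
proof -
  have "Q u dvd (\<Prod>{q \<in> prime_factors b. q < u}) ^ Q u"
  proof (rule dvd_power_if_prime_factors_dvd[OF Q_pos[OF assms]])
    fix q assume "q \<in> prime_factors (Q u)"
    then have "prime q" "q < u" "q dvd b"
      using Q_prime_factors[OF assms] by auto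
    then show "q dvd \<Prod>{q \<in> prime_factors b. q < u}"
      using b_pos by (intro dvd_prodI) (auto intro: prime_factorsI)
  qed
  also have "\<dots> dvd (\<Prod>{q \<in> prime_factors b. q < u}) ^ K"
    using Q_le_K[OF assms] by (rule le_imp_power_dvd)
  finally show ?thesis .
qed

lemma solution_class_prime_power_step:
  assumes u: "u \<in> prime_factors b" and "0 < c" "coprime c u" "Q u dvd c ^ K" "Suc k \<le> K"
    and sol: "solution_class f a (tail K) (int (c ^ K * u ^ k)) r"
  shows "\<exists>r'. solution_class f a (tail K) (int (c ^ K * u ^ Suc k)) r'"
proof -
  have "orbit_periodic_mod f a (int u ^ Suc k) (Q u * u ^ k) (T u + Suc k * B u)"
    using periodic[OF u, of "Suc k"] by simp
  moreover have "T u + Suc k * B u \<le> tail K"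
    using le_trans[OF tail_ge[OF u] tail_mono[OF \<open>Suc k \<le> K\<close>]] .
  ultimately have "orbit_periodic_mod f a (int u ^ Suc k) (Q u * u ^ k) (tail K)"
    by (rule orbit_periodic_mod_mono)
  moreover have "int (Q u * u ^ k) dvd int (c ^ K * u ^ k)"
    unfolding of_nat_dvd_iff using \<open>Q u dvd c ^ K\<close> by (rule mult_dvd_mono) simp
  moreover have "0 < int (c ^ K * u ^ k)"
    using \<open>0 < c\<close> prime_gt_0_nat[OF in_prime_factors_imp_prime[OF u]] by simp
  ultimately obtain r' where
    "solution_class f a (max (tail K) (tail K)) (lcm (int (c ^ K * u ^ k)) (int u ^ Suc k)) r'"
    using solution_class_lift[OF sol] by blast
  moreover have "lcm (int (c ^ K * u ^ k)) (int u ^ Suc k) = int (lcm (c ^ K * u ^ k) (u ^ Suc k))"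
    by (simp only: of_nat_power[symmetric] lcm_int_int_eq)
  moreover have "lcm (c ^ K * u ^ k) (u ^ Suc k) = c ^ K * u ^ Suc k"
    using \<open>coprime c u\<close> by (intro lcm_mult_power_Suc) simp
  ultimately show ?thesis
    by auto
qed

lemma solution_class_below:
  "\<exists>r. solution_class f a (tail K) (int ((\<Prod>{q \<in> prime_factors b. q < u}) ^ K)) r"
proof (induction u)
  case 0
  show ?case
    by (intro exI[of _ 0]) (simp add: solution_class_def)
next
  case (Suc u)
  then obtain r where r: "solution_class f a (tail K) (int ((\<Prod>{q \<in> prime_factors b. q < u}) ^ K)) r"
    by blast
  show ?case
  proof (cases "u \<in> prime_factors b")
    case False
    then have "{q \<in> prime_factors b. q < Suc u} = {q \<in> prime_factors b. q < u}"
      by (auto simp: less_Suc_eq)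
    with r show ?thesis
      by auto
  next
    case True
    define c where "c = \<Prod>{q \<in> prime_factors b. q < u}"
    have "{q \<in> prime_factors b. q < Suc u} = insert u {q \<in> prime_factors b. q < u}"
      using True by (auto simp: less_Suc_eq)
    then have prod_Suc: "\<Prod>{q \<in> prime_factors b. q < Suc u} = u * c"
      by (simp add: c_def)
    have "0 < c"
      unfolding c_def by (intro prod_pos) (auto intro: prime_gt_0_nat)
    have "coprime c u"
      unfolding c_def using True by (intro prod_coprime_left) (auto intro: primes_coprime)
    have "\<exists>r. solution_class f a (tail K) (int (c ^ K * u ^ k)) r" if "k \<le> K" for k
      using that
    proof (induction k)
      case 0
      show ?case
        using r by (intro exI[of _ r]) (simp add: c_def)
    next
      case (Suc k)
      then show ?case
        using solution_class_prime_power_step[OF True \<open>0 < c\<close> \<open>coprime c u\<close>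
            Q_dvd_power_primes_below[OF True, folded c_def]]
        by auto
    qed
    from this[of K] show ?thesis
      by (simp add: prod_Suc power_mult_distrib mult.commute)
  qed
qed

lemma solution_class_base: "\<exists>r. solution_class f a X0 (int b ^ K) r"
proof -
  have "{q \<in> prime_factors b. q < Suc b} = prime_factors b"
    using b_pos by (auto simp: less_Suc_eq_le dvd_imp_le)
  then have "\<exists>r. solution_class f a (tail K) (int b ^ K) r"
    using solution_class_below[of "Suc b"] by (simp add: prod_prime_factors_squarefree[OF squarefree])
  then show ?thesis
    using solution_class_uniform_tail[OF order.refl] by blast
qed

lemma coherent_solution_classes:
  obtains s where "\<And>j. solution_class f a X0 (int b ^ (K + j)) (s j)"
    and "\<And>j. [s (Suc j) = s j] (mod int b ^ (K + j))"
proof -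
  have "\<exists>s. \<forall>j. solution_class f a X0 (int b ^ (K + j)) (s j) \<and>
      [s (Suc j) = s j] (mod int b ^ (K + j))"
  proof (rule dependent_nat_choice)
    show "\<exists>r. solution_class f a X0 (int b ^ (K + 0)) r"
      using solution_class_base by simp
    fix r j assume "solution_class f a X0 (int b ^ (K + j)) r"
    then obtain r' where "[r' = r] (mod int b ^ (K + j))"
      "solution_class f a X0 (int b ^ Suc (K + j)) r'"
      using solution_class_step[OF le_add1] by blast
    then show "\<exists>r'. solution_class f a X0 (int b ^ (K + Suc j)) r' \<and>
        [r' = r] (mod int b ^ (K + j))"
      by auto
  qed
  with that show ?thesis
    by blast
qed

lemma solution_sequence:
  "\<exists>x :: nat \<Rightarrow> nat.
     (\<forall>n\<ge>1. x n > 0 \<and> [(poly f ^^ x n) a = int (x n)] (mod int (b ^ n))) \<and>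
     (\<forall>n\<ge>2. \<exists>c::int. 0 \<le> c \<and> c < int b \<and> int (x n) = c * int b ^ (n - 1) + int (x (n - 1)))"
proof -
  obtain s where s: "\<And>j. solution_class f a X0 (int b ^ (K + j)) (s j)"
    and s_coherent: "\<And>j. [s (Suc j) = s j] (mod int b ^ (K + j))"
    using coherent_solution_classes by blast
  define \<rho> where "\<rho> n = s (n - K)" for n
  have coherent: "[\<rho> (Suc n) = \<rho> n] (mod int b ^ n)" for n
  proof (cases "K \<le> n")
    case True
    then show ?thesis
      using s_coherent[of "n - K"] by (simp add: \<rho>_def Suc_diff_le)
  qed (simp add: \<rho>_def)
  obtain X where X: "X0 + 1 \<le> X" "[int X = s 0] (mod int b ^ K)"
    using exists_ge_in_class[of "int b ^ K"] b_pos by auto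
  define x where "x n = X + nat ((\<rho> n - int X) mod int b ^ n)" for n
  note approx = base_expansion_approximants[OF b_pos coherent x_def]
  have "[orbit f a (x n) = int (x n)] (mod int b ^ n)" for n
  proof (cases "K \<le> n")
    case True
    then have "solution_class f a X0 (int b ^ n) (\<rho> n)"
      using s[of "n - K"] by (simp add: \<rho>_def)
    moreover have "X0 \<le> x n"
      using approx(1)[of n] X(1) by simp
    ultimately show ?thesis
      using approx(2)[of n] by (simp add: solution_class_def)
  next
    case False
    then have "int b ^ n dvd int b ^ K"
      by (simp add: le_imp_power_dvd)
    with cong_sym[OF X(2)] have "[s 0 = int X] (mod int b ^ n)"
      by (rule cong_dvd_modulus)
    then have "[\<rho> n = int X] (mod int b ^ n)"
      using False by (simp add: \<rho>_def)
    then have "x n = X"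
      by (rule approx(3))
    have "[orbit f a X = int X] (mod int b ^ K)"
      using s[of 0] X by (simp add: solution_class_def)
    then have "[orbit f a X = int X] (mod int b ^ n)"
      using \<open>int b ^ n dvd int b ^ K\<close> by (rule cong_dvd_modulus)
    then show ?thesis
      using \<open>x n = X\<close> by simp
  qed
  moreover have "0 < x n" for n
    using approx(1)[of n] X(1) by simp
  moreover have "\<exists>c::int. 0 \<le> c \<and> c < int b \<and> int (x n) = c * int b ^ (n - 1) + int (x (n - 1))"
    if "2 \<le> n" for n
    using approx(4)[of "n - 1"] that by (simp add: Suc_diff_Suc numeral_2_eq_2)
  ultimately show ?thesis
    by (intro exI[of _ x]) (simp add: orbit_def)
qed

end

theorem theorem1p5:
  fixes f :: "int poly" and a :: int and b :: nat
  assumes "tower_stable f" and "a > 0" and "b > 0" and "f_valid f b"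
  shows "\<exists>x :: nat \<Rightarrow> nat.
           (\<forall>n\<ge>1. x n > 0 \<and> [(poly f ^^ x n) a = int (x n)] (mod int (b ^ n))) \<and>
           (\<forall>n\<ge>2. \<exists>c::int. 0 \<le> c \<and> c < int b \<and>
                    int (x n) = c * int b ^ (n - 1) + int (x (n - 1)))"
proof -
  have "\<exists>Q T B X. 0 < Q \<and> (\<forall>q. prime q \<longrightarrow> q dvd Q \<longrightarrow> q < p \<and> q dvd b) \<and>
      orbit_tower_data f a p Q T B X" if "p \<in> prime_factors b" for p
  proof -
    have "prime p" "p dvd b"
      using that by auto
    then show ?thesis
      by (rule orbit_tower_data_exists[OF assms(1,4)])
  qed
  then obtain Q T B X where data: "\<And>p. p \<in> prime_factors b \<Longrightarrow>
      0 < Q p \<and> (\<forall>q. prime q \<longrightarrow> q dvd Q p \<longrightarrow> q < p \<and> q dvd b) \<and>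
      orbit_tower_data f a p (Q p) (T p) (B p) (X p)"
    by metis
  interpret orbit_prime_data f a b Q T B X
  proof
    show "squarefree b"
      using assms(4) by (simp add: f_valid_def)
  qed (use data in blast)+
  show ?thesis
    by (rule solution_sequence)
qed

end
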